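(* Let $n\ge2$, $k\ge1$. Let $\overline C^{\circ}=\{f\in M:\langle f-r^{2k},g-r^{2k}\rangle\le1\ \forall g\in\overline C\}$ be the polar of $\overline C$ in $M$ with respect to the origin $r^{2k}$. Then $\overline C^{\circ}=-\overline C^{*}+2r^{2k}$.
   Context: $P_{n,2k}$: real forms of degree $2k$ in $n$ variables; $r^{2k}=(x_1^2+\dots+x_n^2)^k$; $\langle f,g\rangle=\int_{S^{n-1}}fg\,d\sigma$ with $\sigma$ the rotation-invariant probability measure on $S^{n-1}$. $M=\{f\in P_{n,2k}:\int f\,d\sigma=1\}$, $C$ the cone of nonnegative forms, $\overline C=C\cap M$, $C^*=\{f:\langle f,g\rangle\ge0\ \forall g\in C\}$, $\overline C^*=C^*\cap M$. *)

theory Defs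
  imports "HOL-Analysis.Analysis"
begin

definition monomials :: "nat \<Rightarrow> ('n::finite \<Rightarrow> nat) set" where
  "monomials d = {\<alpha>. (\<Sum>i\<in>UNIV. \<alpha> i) = d}"

text \<open>P_{n,d}: real forms (homogeneous polynomials) of degree d in n = CARD('n) variables,
  represented by their polynomial functions on R^n.\<close>
definition forms :: "nat \<Rightarrow> (real^'n::finite \<Rightarrow> real) set" where
  "forms d = {f. \<exists>c :: ('n \<Rightarrow> nat) \<Rightarrow> real.
      \<forall>x. f x = (\<Sum>\<alpha>\<in>monomials d. c \<alpha> * (\<Prod>i\<in>UNIV. (x $ i) ^ (\<alpha> i)))}"

definition rpow :: "nat \<Rightarrow> real^'n::finite \<Rightarrow> real" where
  "rpow k x = (\<Sum>i\<in>UNIV. (x $ i)^2) ^ k"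

text \<open>The rotation-invariant probability measure on the unit sphere S^{n-1}, obtained as
  the push-forward of the normalized Lebesgue measure on the unit ball under radial projection.\<close>
definition sphere_measure :: "(real^'n::finite) measure" where
  "sphere_measure = distr (uniform_measure lborel (ball 0 1)) borel (\<lambda>x. x /\<^sub>R norm x)"

definition sinner :: "(real^'n::finite \<Rightarrow> real) \<Rightarrow> (real^'n \<Rightarrow> real) \<Rightarrow> real" where
  "sinner f g = (\<integral>x. f x * g x \<partial>(sphere_measure :: (real^'n) measure))"

definition Mset :: "nat \<Rightarrow> (real^'n::finite \<Rightarrow> real) set" where
  "Mset k = {f \<in> forms (2*k). (\<integral>x. f x \<partial>(sphere_measure :: (real^'n) measure)) = 1}"

definition Ccone :: "nat \<Rightarrow> (real^'n::finite \<Rightarrow> real) set" where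
  "Ccone k = {f \<in> forms (2*k). \<forall>x. 0 \<le> f x}"

definition Cbar :: "nat \<Rightarrow> (real^'n::finite \<Rightarrow> real) set" where
  "Cbar k = Ccone k \<inter> Mset k"

definition Cdual :: "nat \<Rightarrow> (real^'n::finite \<Rightarrow> real) set" where
  "Cdual k = {f \<in> forms (2*k). \<forall>g\<in>Ccone k. 0 \<le> sinner f g}"

definition Cdualbar :: "nat \<Rightarrow> (real^'n::finite \<Rightarrow> real) set" where
  "Cdualbar k = Cdual k \<inter> Mset k"

definition Cpolar :: "nat \<Rightarrow> (real^'n::finite \<Rightarrow> real) set" where
  "Cpolar k = {f \<in> Mset k. \<forall>g\<in>Cbar k.
      sinner (\<lambda>x. f x - rpow k x) (\<lambda>x. g x - rpow k x) \<le> 1}"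

end

theory Submission
  imports Defs "HOL-Probability.Probability_Measure"
begin

text \<open>Since \<open>r\<^sup>2\<^sup>k = 1\<close> on the sphere, for \<open>f, g \<in> M\<close> one has
  \<open>\<langle>f - r\<^sup>2\<^sup>k, g - r\<^sup>2\<^sup>k\<rangle> = \<langle>f, g\<rangle> - 1\<close> and \<open>\<langle>2r\<^sup>2\<^sup>k - f, g\<rangle> = 2 - \<langle>f, g\<rangle>\<close>.
  So \<open>f \<in> M\<close> lies in the polar of \<open>\<overline>C\<close> iff \<open>2r\<^sup>2\<^sup>k - f\<close> pairs nonnegatively with
  every element of \<open>\<overline>C\<close>, hence, after rescaling, with every element of \<open>C\<close>. As
  \<open>f \<mapsto> 2r\<^sup>2\<^sup>k - f\<close> is an involution preserving \<open>M\<close>, the polar is the image of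
  \<open>\<overline>C\<^sup>*\<close> under it.\<close>

lemma mem_image_involution:
  assumes "\<And>x. g (g x) = x"
  shows "y \<in> g ` A \<longleftrightarrow> g y \<in> A"
proof
  show "y \<in> g ` A \<Longrightarrow> g y \<in> A"
    using assms by auto
  show "g y \<in> A \<Longrightarrow> y \<in> g ` A"
    using image_eqI[of y g "g y" A] assms by simp
qed

section \<open>The sphere measure\<close>

lemma prob_space_uniform_measure_ball:
  "prob_space (uniform_measure lborel (ball (0::'a::euclidean_space) 1))"
proof (rule prob_space_uniform_measure)
  have "measure lborel (ball (0::'a) 1) > 0"
    using content_ball_pos[of 1 "0::'a"] by simp
  then show "emeasure lborel (ball (0::'a) 1) \<noteq> 0"
    by (auto simp: measure_def)
  show "emeasure lborel (ball (0::'a) 1) \<noteq> \<infinity>"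
    using emeasure_lborel_ball_finite[of "0::'a" 1] by simp
qed

lemma borel_measurable_radial_projection:
  "(\<lambda>x::'a::euclidean_space. x /\<^sub>R norm x) \<in> borel_measurable borel"
  by measurable

lemma prob_space_sphere_measure: "prob_space (sphere_measure :: (real^'n::finite) measure)"
  unfolding sphere_measure_def
  by (rule prob_space.prob_space_distr[OF prob_space_uniform_measure_ball])
     (simp add: borel_measurable_radial_projection)

lemma sets_sphere_measure: "sets (sphere_measure :: (real^'n::finite) measure) = sets borel"
  by (simp add: sphere_measure_def)

lemma AE_sphere_measure_norm_eq_1:
  "AE x in (sphere_measure :: (real^'n::finite) measure). norm x = 1"
proof -
  have "AE x in lborel. (x::real^'n) \<notin> {0}"
    by (intro AE_not_in countable_imp_null_set_lborel) auto
  then have "AE x in uniform_measure lborel (ball (0::real^'n) 1). norm (x /\<^sub>R norm x) = 1"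
    by (intro AE_uniform_measureI) auto
  then show ?thesis
    unfolding sphere_measure_def
    by (subst AE_distr_iff) (auto simp: borel_measurable_radial_projection)
qed

lemma borel_measurable_sphere_measure_continuous:
  "continuous_on UNIV f \<Longrightarrow> (f :: real^'n::finite \<Rightarrow> real) \<in> borel_measurable sphere_measure"
  using borel_measurable_continuous_onI[of f]
  by (simp cong: measurable_cong_sets add: sets_sphere_measure)

text \<open>Continuous functions are bounded on the sphere, which carries all of the mass.\<close>
lemma integrable_sphere_measure_continuous:
  assumes "continuous_on UNIV f"
  shows "integrable (sphere_measure :: (real^'n::finite) measure) (f :: _ \<Rightarrow> real)"
proof -
  interpret prob_space "sphere_measure :: (real^'n) measure"
    by (rule prob_space_sphere_measure)
  have "compact (f ` sphere 0 1)"
    by (rule compact_continuous_image) (auto intro: continuous_on_subset[OF assms])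
  then obtain B where B: "\<And>x. x \<in> sphere 0 1 \<Longrightarrow> norm (f x) \<le> B"
    using compact_imp_bounded bounded_iff by (metis image_eqI)
  show ?thesis
  proof (rule integrable_const_bound[where B = B])
    show "AE x in sphere_measure. norm (f x) \<le> B"
      using AE_sphere_measure_norm_eq_1 by eventually_elim (metis B mem_sphere_0 real_norm_def)
  qed (rule borel_measurable_sphere_measure_continuous[OF assms])
qed

lemma integral_sphere_measure_cong:
  fixes f g :: "real^'n::finite \<Rightarrow> real"
  assumes "continuous_on UNIV f" "continuous_on UNIV g" "\<And>x. norm x = 1 \<Longrightarrow> f x = g x"
  shows "(\<integral>x. f x \<partial>sphere_measure) = (\<integral>x. g x \<partial>sphere_measure)"
proof (rule integral_cong_AE)
  show "AE x in sphere_measure. f x = g x"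
    using AE_sphere_measure_norm_eq_1 by eventually_elim (use assms(3) in auto)
qed (auto intro: borel_measurable_sphere_measure_continuous assms)

lemma measure_sphere_measure_space:
  "measure (sphere_measure :: (real^'n::finite) measure) (space sphere_measure) = 1"
  by (rule prob_space.prob_space[OF prob_space_sphere_measure])

section \<open>Forms\<close>

lemma finite_monomials: "finite (monomials d :: ('n::finite \<Rightarrow> nat) set)"
proof (rule finite_subset)
  show "monomials d \<subseteq> PiE UNIV (\<lambda>_::'n. {..d})"
  proof
    fix \<alpha> :: "'n \<Rightarrow> nat"
    assume "\<alpha> \<in> monomials d"
    then have "\<alpha> i \<le> d" for i
      using member_le_sum[of i UNIV \<alpha>] by (simp add: monomials_def)
    then show "\<alpha> \<in> PiE UNIV (\<lambda>_. {..d})"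
      by (simp add: PiE_def extensional_def)
  qed
qed (rule finite_PiE, auto)

lemma forms_linear_combination:
  assumes "f \<in> forms d" "g \<in> forms d"
  shows "(\<lambda>x. a * f x + b * g x) \<in> (forms d :: (real^'n::finite \<Rightarrow> real) set)"
proof -
  obtain c where c: "\<And>x. f x = (\<Sum>\<alpha>\<in>monomials d. c \<alpha> * (\<Prod>i\<in>UNIV. (x $ i) ^ (\<alpha> i)))"
    using assms(1) by (auto simp: forms_def)
  obtain c' where c': "\<And>x. g x = (\<Sum>\<alpha>\<in>monomials d. c' \<alpha> * (\<Prod>i\<in>UNIV. (x $ i) ^ (\<alpha> i)))"
    using assms(2) by (auto simp: forms_def)
  show ?thesis
    unfolding forms_def
    by (rule CollectI, rule exI[of _ "\<lambda>\<alpha>. a * c \<alpha> + b * c' \<alpha>"])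
       (simp add: c c' sum_distrib_left sum.distrib[symmetric] algebra_simps)
qed

lemma forms_zero: "(\<lambda>x. 0) \<in> (forms d :: (real^'n::finite \<Rightarrow> real) set)"
  unfolding forms_def by (rule CollectI, rule exI[of _ "\<lambda>_. 0"]) simp

lemma forms_sum:
  assumes "finite A" "\<And>a. a \<in> A \<Longrightarrow> F a \<in> forms d"
  shows "(\<lambda>x. \<Sum>a\<in>A. F a x) \<in> (forms d :: (real^'n::finite \<Rightarrow> real) set)"
  using assms
proof (induction A rule: finite_induct)
  case empty
  then show ?case by (simp add: forms_zero)
next
  case (insert a A)
  then show ?case
    using forms_linear_combination[of "F a" d "\<lambda>x. \<Sum>a\<in>A. F a x" 1 1] by simp
qed

lemma forms_mult:
  assumes "f \<in> forms d" "g \<in> forms e"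
  shows "(\<lambda>x. f x * g x) \<in> (forms (d + e) :: (real^'n::finite \<Rightarrow> real) set)"
proof -
  let ?m = "\<lambda>(\<alpha>::'n \<Rightarrow> nat) (x::real^'n). \<Prod>i\<in>UNIV. (x $ i) ^ (\<alpha> i)"
  obtain c where c: "\<And>x. f x = (\<Sum>\<alpha>\<in>monomials d. c \<alpha> * ?m \<alpha> x)"
    using assms(1) by (auto simp: forms_def)
  obtain c' where c': "\<And>x. g x = (\<Sum>\<alpha>\<in>monomials e. c' \<alpha> * ?m \<alpha> x)"
    using assms(2) by (auto simp: forms_def)
  define S where "S = (monomials d :: ('n \<Rightarrow> nat) set) \<times> (monomials e :: ('n \<Rightarrow> nat) set)"
  define add where "add = (\<lambda>p::('n \<Rightarrow> nat) \<times> ('n \<Rightarrow> nat). (\<lambda>i. fst p i + snd p i))"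
  define C where "C = (\<lambda>\<gamma>. \<Sum>p\<in>{p\<in>S. add p = \<gamma>}. c (fst p) * c' (snd p))"
  have add_S: "add ` S \<subseteq> monomials (d + e)"
    by (auto simp: S_def add_def monomials_def sum.distrib)
  have m_add: "?m (add p) x = ?m (fst p) x * ?m (snd p) x" for p x
    by (simp add: add_def power_add prod.distrib)
  have "f x * g x = (\<Sum>\<gamma>\<in>monomials (d + e). C \<gamma> * ?m \<gamma> x)" for x
  proof -
    have "f x * g x = (\<Sum>p\<in>S. c (fst p) * c' (snd p) * ?m (add p) x)"
      unfolding c c' S_def sum_product sum.cartesian_product m_add
      by (rule sum.cong) (auto simp: algebra_simps)
    also have "\<dots> = (\<Sum>\<gamma>\<in>monomials (d + e).
                      \<Sum>p\<in>{p\<in>S. add p = \<gamma>}. c (fst p) * c' (snd p) * ?m (add p) x)"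
      by (rule sum.group[symmetric, OF _ finite_monomials add_S]) (simp add: S_def finite_monomials)
    also have "\<dots> = (\<Sum>\<gamma>\<in>monomials (d + e). C \<gamma> * ?m \<gamma> x)"
      unfolding C_def sum_distrib_right by (rule sum.cong[OF refl], rule sum.cong) auto
    finally show ?thesis .
  qed
  then show ?thesis
    unfolding forms_def by (intro CollectI exI[of _ C]) blast
qed

lemma forms_component: "(\<lambda>x. x $ j) \<in> (forms 1 :: (real^'n::finite \<Rightarrow> real) set)"
proof -
  define e where "e = (\<lambda>i::'n. if i = j then 1 else (0::nat))"
  have e: "e \<in> monomials 1"
    by (simp add: e_def monomials_def)
  have "(\<Prod>i\<in>UNIV. (x $ i) ^ (e i)) = x $ j" for x :: "real^'n"
    by (simp add: e_def if_distrib[of "\<lambda>n. _ ^ n"] prod.delta cong: if_cong)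
  then have "x $ j = (\<Sum>\<alpha>\<in>monomials 1. (if \<alpha> = e then 1 else 0) * (\<Prod>i\<in>UNIV. (x $ i) ^ (\<alpha> i)))"
    for x :: "real^'n"
    using e by (simp add: if_distrib[of "\<lambda>c. c * _"] finite_monomials cong: if_cong)
  then show ?thesis
    unfolding forms_def by (intro CollectI exI[of _ "\<lambda>\<alpha>. if \<alpha> = e then 1 else 0"]) blast
qed

lemma forms_one: "(\<lambda>x. 1) \<in> (forms 0 :: (real^'n::finite \<Rightarrow> real) set)"
proof -
  have "monomials 0 = {(\<lambda>_::'n. 0::nat)}"
    by (auto simp: monomials_def)
  then show ?thesis
    unfolding forms_def by (intro CollectI exI[of _ "\<lambda>_. 1"]) simp
qed

lemma continuous_on_forms:
  assumes "f \<in> (forms d :: (real^'n::finite \<Rightarrow> real) set)"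
  shows "continuous_on UNIV f"
proof -
  obtain c where "\<And>x. f x = (\<Sum>\<alpha>\<in>monomials d. c \<alpha> * (\<Prod>i\<in>UNIV. (x $ i) ^ (\<alpha> i)))"
    using assms by (auto simp: forms_def)
  then have "f = (\<lambda>x. \<Sum>\<alpha>\<in>monomials d. c \<alpha> * (\<Prod>i\<in>UNIV. (x $ i) ^ (\<alpha> i)))"
    by auto
  then show ?thesis
    by (simp add: continuous_intros)
qed

section \<open>The form \<open>r\<^sup>2\<^sup>k\<close>\<close>

lemma rpow_in_forms: "rpow k \<in> (forms (2 * k) :: (real^'n::finite \<Rightarrow> real) set)"
proof (induction k)
  case 0
  then show ?case
    using forms_one by (simp add: rpow_def[abs_def])
next
  case (Suc k)
  have "(\<lambda>x::real^'n. x $ i * x $ i) \<in> forms 2" for i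
    using forms_mult[OF forms_component forms_component, of i i] unfolding one_add_one .
  then have "(\<lambda>x::real^'n. \<Sum>i\<in>UNIV. (x $ i)^2) \<in> forms 2"
    by (intro forms_sum) (simp_all add: power2_eq_square)
  from forms_mult[OF this Suc.IH] show ?case
    by (simp add: rpow_def[abs_def])
qed

lemma continuous_on_rpow: "continuous_on UNIV (rpow k :: real^'n::finite \<Rightarrow> real)"
  by (rule continuous_on_forms[OF rpow_in_forms])

lemma rpow_on_sphere: "norm (x::real^'n::finite) = 1 \<Longrightarrow> rpow k x = 1"
  by (simp add: rpow_def norm_vec_def L2_set_def sum_nonneg)

lemma integral_sphere_measure_rpow:
  "(\<integral>x. rpow k x \<partial>(sphere_measure :: (real^'n::finite) measure)) = 1"
proof -
  have "(\<integral>x. rpow k (x::real^'n) \<partial>sphere_measure) = (\<integral>x. 1 \<partial>(sphere_measure :: (real^'n) measure))"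
    by (rule integral_sphere_measure_cong) (auto intro: continuous_on_rpow rpow_on_sphere)
  then show ?thesis
    by (simp add: measure_sphere_measure_space)
qed

lemma sinner_diff_rpow:
  fixes f g :: "real^'n::finite \<Rightarrow> real"
  assumes f: "continuous_on UNIV f" and g: "continuous_on UNIV g"
  shows "sinner (\<lambda>x. f x - rpow k x) (\<lambda>x. g x - rpow k x)
     = sinner f g - (\<integral>x. f x \<partial>sphere_measure) - (\<integral>x. g x \<partial>sphere_measure) + 1"
proof -
  have "sinner (\<lambda>x. f x - rpow k x) (\<lambda>x. g x - rpow k x)
      = (\<integral>x. f x * g x - f x - g x + 1 \<partial>sphere_measure)"
    unfolding sinner_def
    by (rule integral_sphere_measure_cong)
       (auto intro!: continuous_intros f g continuous_on_rpow simp: rpow_on_sphere algebra_simps)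
  also have "\<dots> = sinner f g - (\<integral>x. f x \<partial>sphere_measure) - (\<integral>x. g x \<partial>sphere_measure) + 1"
    unfolding sinner_def
    by (simp add: integrable_sphere_measure_continuous continuous_intros f g
        measure_sphere_measure_space)
  finally show ?thesis .
qed

definition rpow_reflection :: "nat \<Rightarrow> (real^'n::finite \<Rightarrow> real) \<Rightarrow> real^'n \<Rightarrow> real" where
  "rpow_reflection k f x = - f x + 2 * rpow k x"

lemma rpow_reflection_rpow_reflection [simp]: "rpow_reflection k (rpow_reflection k f) = f"
  by (simp add: rpow_reflection_def[abs_def])

lemma rpow_reflection_in_forms:
  "f \<in> forms (2 * k) \<Longrightarrow> rpow_reflection k f \<in> forms (2 * k)"
  using forms_linear_combination[OF _ rpow_in_forms, of f _ "-1" 2]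
  by (simp add: rpow_reflection_def[abs_def])

lemma integral_rpow_reflection:
  "continuous_on UNIV f \<Longrightarrow>
    (\<integral>x. rpow_reflection k f x \<partial>sphere_measure) = 2 - (\<integral>x. f x \<partial>sphere_measure)"
  unfolding rpow_reflection_def
  by (simp add: integrable_sphere_measure_continuous continuous_intros continuous_on_rpow
      integral_sphere_measure_rpow)

lemma sinner_rpow_reflection:
  fixes f g :: "real^'n::finite \<Rightarrow> real"
  assumes f: "continuous_on UNIV f" and g: "continuous_on UNIV g"
  shows "sinner (rpow_reflection k f) g = 2 * (\<integral>x. g x \<partial>sphere_measure) - sinner f g"
proof -
  have "sinner (rpow_reflection k f) g = (\<integral>x. 2 * g x - f x * g x \<partial>sphere_measure)"
    unfolding sinner_def rpow_reflection_def
    by (rule integral_sphere_measure_cong)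
       (auto intro!: continuous_intros f g continuous_on_rpow simp: rpow_on_sphere algebra_simps)
  also have "\<dots> = 2 * (\<integral>x. g x \<partial>sphere_measure) - sinner f g"
    unfolding sinner_def
    by (simp add: integrable_sphere_measure_continuous continuous_intros f g)
  finally show ?thesis .
qed

lemma rpow_reflection_in_Mset: "f \<in> Mset k \<Longrightarrow> rpow_reflection k f \<in> Mset k"
  using continuous_on_forms[of f "2 * k"]
  by (simp add: Mset_def rpow_reflection_in_forms integral_rpow_reflection)

lemma rpow_reflection_in_Mset_iff: "rpow_reflection k f \<in> Mset k \<longleftrightarrow> f \<in> Mset k"
  using rpow_reflection_in_Mset[of "rpow_reflection k f" k] rpow_reflection_in_Mset[of f k]
  by auto

section \<open>Polar and dual cone\<close>

lemma sinner_eq_0_if_nonneg_integral_eq_0: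
  fixes g :: "real^'n::finite \<Rightarrow> real"
  assumes "continuous_on UNIV g" "\<And>x. 0 \<le> g x" "(\<integral>x. g x \<partial>sphere_measure) = 0"
  shows "sinner h g = 0"
proof -
  have "AE x in sphere_measure. g x = 0"
    using integral_nonneg_eq_0_iff_AE[OF integrable_sphere_measure_continuous[OF assms(1)]] assms(2,3)
    by simp
  then have "AE x in sphere_measure. h x * g x = 0"
    by eventually_elim simp
  then show ?thesis
    unfolding sinner_def by (rule integral_eq_zero_AE)
qed

lemma Cdual_iff_nonneg_on_Cbar:
  "h \<in> Cdual k \<longleftrightarrow> h \<in> forms (2 * k) \<and> (\<forall>g\<in>Cbar k. 0 \<le> sinner h g)"
proof (intro iffI conjI ballI; (elim conjE)?)
  show "h \<in> Cdual k \<Longrightarrow> h \<in> forms (2 * k)" by (simp add: Cdual_def)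
  show "h \<in> Cdual k \<Longrightarrow> g \<in> Cbar k \<Longrightarrow> 0 \<le> sinner h g" for g
    by (simp add: Cdual_def Cbar_def)
  assume h: "h \<in> forms (2 * k)" and nonneg: "\<forall>g\<in>Cbar k. 0 \<le> sinner h g"
  have "0 \<le> sinner h g" if g: "g \<in> Ccone k" for g
  proof -
    have g_forms: "g \<in> forms (2 * k)" and g_nonneg: "\<And>x. 0 \<le> g x"
      using g by (auto simp: Ccone_def)
    define I where "I = (\<integral>x. g x \<partial>sphere_measure)"
    have "0 \<le> I"
      unfolding I_def by (rule integral_nonneg_AE) (simp add: g_nonneg)
    then consider "I = 0" | "I > 0" by linarith
    then show ?thesis
    proof cases
      case 1
      then show ?thesis
        using sinner_eq_0_if_nonneg_integral_eq_0[OF continuous_on_forms[OF g_forms] g_nonneg]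
        by (simp add: I_def)
    next
      case 2
      have "(\<lambda>x. g x / I) \<in> Cbar k"
        using forms_linear_combination[OF g_forms g_forms, of "1 / I" 0] g_nonneg 2
        by (simp add: Cbar_def Ccone_def Mset_def I_def)
      then have "0 \<le> sinner h (\<lambda>x. g x / I)"
        using nonneg by blast
      also have "sinner h (\<lambda>x. g x / I) = sinner h g / I"
        by (simp add: sinner_def)
      finally show ?thesis
        using 2 by (simp add: zero_le_divide_iff)
    qed
  qed
  then show "h \<in> Cdual k"
    using h by (simp add: Cdual_def)
qed

lemma Cpolar_iff_rpow_reflection_in_Cdual:
  "f \<in> Cpolar k \<longleftrightarrow> f \<in> Mset k \<and> rpow_reflection k f \<in> Cdual k"
proof (cases "f \<in> Mset k")
  case True
  then have f: "f \<in> forms (2 * k)" "(\<integral>x. f x \<partial>sphere_measure) = 1"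
    by (simp_all add: Mset_def)
  have "sinner (\<lambda>x. f x - rpow k x) (\<lambda>x. g x - rpow k x) \<le> 1
      \<longleftrightarrow> 0 \<le> sinner (rpow_reflection k f) g" if "g \<in> Cbar k" for g
  proof -
    have g: "g \<in> forms (2 * k)" "(\<integral>x. g x \<partial>sphere_measure) = 1"
      using that by (simp_all add: Cbar_def Mset_def)
    show ?thesis
      using sinner_diff_rpow[of f g k] sinner_rpow_reflection[of f g k] f g
      by (simp add: continuous_on_forms)
  qed
  then show ?thesis
    using True f(1) rpow_reflection_in_forms[OF f(1)]
    by (auto simp: Cpolar_def Cdual_iff_nonneg_on_Cbar)
qed (simp add: Cpolar_def)

theorem lemma5p1:
  assumes "CARD('n::finite) \<ge> 2" and "k \<ge> 1"
  shows "(Cpolar k :: (real^'n \<Rightarrow> real) set)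
           = (\<lambda>h x. - h x + 2 * rpow k x) ` (Cdualbar k :: (real^'n \<Rightarrow> real) set)"
proof -
  have "f \<in> Cpolar k \<longleftrightarrow> f \<in> rpow_reflection k ` Cdualbar k" for f :: "real^'n \<Rightarrow> real"
    by (simp add: mem_image_involution Cpolar_iff_rpow_reflection_in_Cdual Cdualbar_def
        rpow_reflection_in_Mset_iff conj_commute)
  then have "Cpolar k = rpow_reflection k ` (Cdualbar k :: (real^'n \<Rightarrow> real) set)"
    by blast
  then show ?thesis
    by (simp only: rpow_reflection_def[abs_def])
qed

end
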